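(* Let $1<\alpha\leq 2$ and $c_\alpha=\frac{\alpha-1}{\alpha}\vee \sqrt{\frac{2-\alpha}{\alpha}}$. Then $1+y+c_\alpha|y|^\alpha>0$ for all $y\in\mathbb R$, and \[ -\log(1+y+c_\alpha |y|^\alpha)\leq \log(1-y +c_\alpha |y|^{\alpha}) \quad \text{for all } y\in \mathbb R. \]
   Context: $a\vee b=\max(a,b)$. *)

theory Defs
  imports Complex_Main
begin

definition c_alpha :: "real \<Rightarrow> real" where
  "c_alpha \<alpha> = max ((\<alpha> - 1) / \<alpha>) (sqrt ((2 - \<alpha>) / \<alpha>))"

end

theory Submission
  imports Defs "HOL-Analysis.Convex"
begin

text \<open>With the weights \<open>l = 2 - 2/\<alpha>\<close> and \<open>m = 2/\<alpha> - 1\<close> (which sum to 1), weighted AM-GM applied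
  to \<open>s = t\<^sup>\<alpha>\<close> and \<open>s\<^sup>2\<close> gives \<open>t\<^sup>2 = s\<^sup>l (s\<^sup>2)\<^sup>m \<le> l s + m s\<^sup>2\<close>; the two lower bounds on \<open>c\<close> in
  \<open>c_alpha\<close> are exactly \<open>l \<le> 2c\<close> and \<open>m \<le> c\<^sup>2\<close>. Hence \<open>y\<^sup>2 \<le> 2g + g\<^sup>2\<close> for \<open>g = c\<^sub>\<alpha>|y|\<^sup>\<alpha>\<close>, i.e.
  \<open>|y| < 1 + g\<close> and \<open>(1 + y + g)(1 - y + g) = (1 + g)\<^sup>2 - y\<^sup>2 \<ge> 1\<close>, which is the claim after taking logarithms.\<close>

lemma square_le_powr_bound:
  fixes \<alpha> c t :: real
  assumes "1 < \<alpha>" "\<alpha> \<le> 2" "0 \<le> t"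
    and c_lin: "(\<alpha> - 1) / \<alpha> \<le> c" and c_sq: "(2 - \<alpha>) / \<alpha> \<le> c\<^sup>2"
  shows "t\<^sup>2 \<le> 2 * c * t powr \<alpha> + (c * t powr \<alpha>)\<^sup>2"
proof (cases "t = 0")
  case True
  then show ?thesis by simp
next
  case False
  define s where "s = t powr \<alpha>"
  define l where "l = 2 - 2 / \<alpha>"
  define m where "m = 2 / \<alpha> - 1"
  have "t > 0" using \<open>0 \<le> t\<close> False by simp
  then have "s > 0" by (simp add: s_def)
  have "0 \<le> l" "0 \<le> m" "l + m = 1"
    using assms(1,2) by (simp_all add: l_def m_def field_simps)
  have "l \<le> 2 * c" "m \<le> c\<^sup>2"
    using c_lin c_sq assms(1) by (simp_all add: l_def m_def field_simps)
  have "t\<^sup>2 = t powr (\<alpha> * (l + 2 * m))"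
    using assms(1) \<open>t > 0\<close> by (simp add: l_def m_def powr_realpow)
  also have "\<dots> = s powr l * (s\<^sup>2) powr m"
    using \<open>s > 0\<close>
    by (simp add: s_def distrib_left powr_add powr_powr powr_realpow [symmetric] mult_ac)
  also have "\<dots> \<le> l * s + m * s\<^sup>2"
    using Youngs_inequality_0 [OF \<open>0 \<le> l\<close> \<open>0 \<le> m\<close> \<open>l + m = 1\<close> \<open>s > 0\<close>, of "s\<^sup>2"] \<open>s > 0\<close>
    by simp
  also have "\<dots> \<le> 2 * c * s + c\<^sup>2 * s\<^sup>2"
    using \<open>l \<le> 2 * c\<close> \<open>m \<le> c\<^sup>2\<close> \<open>s > 0\<close> by (intro add_mono mult_right_mono) auto
  finally show ?thesis by (simp add: s_def power_mult_distrib)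
qed

lemma square_le_c_alpha_bound:
  fixes \<alpha> t :: real
  assumes "1 < \<alpha>" "\<alpha> \<le> 2" "0 \<le> t"
  shows "t\<^sup>2 \<le> 2 * c_alpha \<alpha> * t powr \<alpha> + (c_alpha \<alpha> * t powr \<alpha>)\<^sup>2"
proof (rule square_le_powr_bound [OF assms])
  show "(\<alpha> - 1) / \<alpha> \<le> c_alpha \<alpha>" by (simp add: c_alpha_def)
  have "(2 - \<alpha>) / \<alpha> = (sqrt ((2 - \<alpha>) / \<alpha>))\<^sup>2"
    using assms(1,2) by simp
  also have "\<dots> \<le> (c_alpha \<alpha>)\<^sup>2"
    using assms(1,2) by (intro power_mono) (auto simp: c_alpha_def zero_le_divide_iff)
  finally show "(2 - \<alpha>) / \<alpha> \<le> (c_alpha \<alpha>)\<^sup>2" .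
qed

lemma c_alpha_nonneg: "1 \<le> \<alpha> \<Longrightarrow> 0 \<le> c_alpha \<alpha>"
  unfolding c_alpha_def by (intro max.coboundedI1) simp

lemma abs_less_of_square_le:
  fixes y g :: real
  assumes "0 \<le> g" "y\<^sup>2 \<le> 2 * g + g\<^sup>2"
  shows "\<bar>y\<bar> < 1 + g"
proof (rule power2_less_imp_less)
  show "\<bar>y\<bar>\<^sup>2 < (1 + g)\<^sup>2" using assms(2) by (simp add: power2_eq_square algebra_simps)
qed (use assms(1) in simp)

lemma neg_ln_le_ln_of_mult_ge_one:
  fixes a b :: real
  assumes "0 < a" "0 < b" "1 \<le> a * b"
  shows "- ln a \<le> ln b"
proof -
  have "0 \<le> ln (a * b)" using assms(3) by simp
  with assms(1,2) show ?thesis by (simp add: ln_mult)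
qed

theorem lemmaA2:
  fixes \<alpha> :: real
  assumes "1 < \<alpha>" and "\<alpha> \<le> 2"
  shows "(\<forall>y::real. 1 + y + c_alpha \<alpha> * \<bar>y\<bar> powr \<alpha> > 0) \<and>
         (\<forall>y::real. - ln (1 + y + c_alpha \<alpha> * \<bar>y\<bar> powr \<alpha>)
                     \<le> ln (1 - y + c_alpha \<alpha> * \<bar>y\<bar> powr \<alpha>))"
proof (intro conjI allI)
  fix y :: real
  define g where "g = c_alpha \<alpha> * \<bar>y\<bar> powr \<alpha>"
  have "0 \<le> g" using c_alpha_nonneg assms(1) by (simp add: g_def)
  have "y\<^sup>2 \<le> 2 * g + g\<^sup>2"
    using square_le_c_alpha_bound [OF assms, of "\<bar>y\<bar>"] by (simp add: g_def)
  then have "\<bar>y\<bar> < 1 + g" using abs_less_of_square_le \<open>0 \<le> g\<close> by blast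
  then have pos: "0 < 1 + y + g" "0 < 1 - y + g" by auto
  then show "1 + y + c_alpha \<alpha> * \<bar>y\<bar> powr \<alpha> > 0" by (simp add: g_def)
  have "(1 + y + g) * (1 - y + g) = 1 + (2 * g + g\<^sup>2 - y\<^sup>2)"
    by (simp add: power2_eq_square algebra_simps)
  with \<open>y\<^sup>2 \<le> 2 * g + g\<^sup>2\<close> have "1 \<le> (1 + y + g) * (1 - y + g)" by simp
  from neg_ln_le_ln_of_mult_ge_one [OF pos this]
  show "- ln (1 + y + c_alpha \<alpha> * \<bar>y\<bar> powr \<alpha>) \<le> ln (1 - y + c_alpha \<alpha> * \<bar>y\<bar> powr \<alpha>)"
    by (simp add: g_def)
qed

end
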